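(* Let $p\in[1,\infty)$ and let $\zeta:\mathbb{R}\to[0,\infty)$ be continuous and decreasing such that $\int_0^\infty\zeta(t)^pt^{n-1}dt<\infty$. If $u_k,u\in\mathrm{Conv}_{\mathrm{coe}}(\mathbb{R}^n)$ are such that $u_k$ epi-converges to $u$, then $\delta_{\zeta,p}(u_k,u)\to 0$ as $k\to\infty$.
   Context: $\mathrm{Conv}_{\mathrm{coe}}(\mathbb{R}^n)$ is the set of proper, lower semicontinuous, convex, coercive functions $u:\mathbb{R}^n\to\mathbb{R}\cup\{+\infty\}$. $\delta_{\zeta,p}(u,v)=\left(\int_{\mathbb{R}^n}|\zeta(u(x))-\zeta(v(x))|^p dx\right)^{1/p}$, with convention $\zeta(+\infty):=\lim_{t\to\infty}\zeta(t)=0$. Epi-convergence $u_k\to u$: for every $x$, $\liminf_k u_k(x_k)\ge u(x)$ for all $x_k\to x$ and $\limsup_k u_k(x_k)\le u(x)$ for some $x_k\to x$. *)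

theory Defs
  imports "HOL-Analysis.Analysis" "HOL-Library.Extended_Real"
begin

text \<open>Functions on R^n with values in R \<union> {+\<infinity>} are modelled as 'a \<Rightarrow> ereal,
  where 'a is a Euclidean space (R^n with n = DIM('a)).\<close>

definition proper_fun :: "('a \<Rightarrow> ereal) \<Rightarrow> bool" where
  "proper_fun u \<longleftrightarrow> (\<forall>x. u x \<noteq> -\<infinity>) \<and> (\<exists>x. u x \<noteq> \<infinity>)"

definition lsc_fun :: "('a::metric_space \<Rightarrow> ereal) \<Rightarrow> bool" where
  "lsc_fun u \<longleftrightarrow> (\<forall>x xs. xs \<longlonglongrightarrow> x \<longrightarrow> u x \<le> liminf (\<lambda>k. u (xs k)))"

definition convex_fun :: "('a::real_vector \<Rightarrow> ereal) \<Rightarrow> bool" where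
  "convex_fun u \<longleftrightarrow> (\<forall>x y t. 0 < t \<and> t < 1 \<longrightarrow>
      u ((1 - t) *\<^sub>R x + t *\<^sub>R y) \<le> ereal (1 - t) * u x + ereal t * u y)"

definition coercive_fun :: "('a::real_normed_vector \<Rightarrow> ereal) \<Rightarrow> bool" where
  "coercive_fun u \<longleftrightarrow> (u \<longlongrightarrow> \<infinity>) at_infinity"

definition Conv_coe :: "('a::euclidean_space \<Rightarrow> ereal) set" where
  "Conv_coe = {u. proper_fun u \<and> lsc_fun u \<and> convex_fun u \<and> coercive_fun u}"

definition epi_converges :: "(nat \<Rightarrow> 'a::metric_space \<Rightarrow> ereal) \<Rightarrow> ('a \<Rightarrow> ereal) \<Rightarrow> bool" where
  "epi_converges us u \<longleftrightarrow> (\<forall>x.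
      (\<forall>xs. xs \<longlonglongrightarrow> x \<longrightarrow> u x \<le> liminf (\<lambda>k. us k (xs k))) \<and>
      (\<exists>xs. xs \<longlonglongrightarrow> x \<and> limsup (\<lambda>k. us k (xs k)) \<le> u x))"

text \<open>Extension of \<zeta> to R \<union> {+\<infinity>} with \<zeta>(+\<infinity>) = 0 (the value at -\<infinity> is irrelevant
  since proper functions never take it).\<close>
definition zeta_ext :: "(real \<Rightarrow> real) \<Rightarrow> ereal \<Rightarrow> real" where
  "zeta_ext \<zeta> s = (case s of ereal r \<Rightarrow> \<zeta> r | _ \<Rightarrow> 0)"

definition delta_zeta_p :: "(real \<Rightarrow> real) \<Rightarrow> real \<Rightarrow> ('a::euclidean_space \<Rightarrow> ereal) \<Rightarrow> ('a \<Rightarrow> ereal) \<Rightarrow> ennreal" where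
  "delta_zeta_p \<zeta> p u v =
     (let I = (\<integral>\<^sup>+ x. ennreal (\<bar>zeta_ext \<zeta> (u x) - zeta_ext \<zeta> (v x)\<bar> powr p) \<partial>lborel)
      in if I = \<infinity> then \<infinity> else ennreal (enn2real I powr (1 / p)))"

end

theory Submission
  imports Defs
begin

text \<open>Epi-convergence of convex coercive functions yields two facts. First, coercivity is
  uniform: eventually all \<open>u_k\<close> lie above one cone \<open>\<alpha> + \<beta>|x|\<close>, so
  \<open>|\<zeta>(u_k) - \<zeta>(u)|^p\<close> is dominated by \<open>2^p \<zeta>(\<alpha> + \<beta>|x|)^p\<close>, whose integral over
  spherical shells is controlled by \<open>\<integral>_0^\<infinity> \<zeta>(t)^p t^(n-1) dt\<close>. Second, \<open>u_k(x) \<rightarrow> u(x)\<close>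
  off the boundary of \<open>dom u\<close>: outside its closure this is the liminf inequality with
  \<open>u(x) = \<infinity>\<close>; in its interior the \<open>u_k\<close> are eventually bounded above near \<open>x\<close>, and
  convexity along a recovery sequence bounds \<open>limsup u_k(x)\<close>. The boundary of a convex set
  is a null set, so \<open>\<zeta>(u_k) \<rightarrow> \<zeta>(u)\<close> almost everywhere and dominated convergence
  concludes.\<close>

lemma Conv_coeD:
  assumes "u \<in> Conv_coe"
  shows "\<And>x. u x \<noteq> -\<infinity>" "\<exists>x. u x \<noteq> \<infinity>" "lsc_fun u" "convex_fun u" "coercive_fun u"
  using assms unfolding Conv_coe_def proper_fun_def by auto

lemma convex_funD:
  assumes "convex_fun f" "0 \<le> t" "t \<le> 1"
  shows "f ((1 - t) *\<^sub>R x + t *\<^sub>R y) \<le> ereal (1 - t) * f x + ereal t * f y"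
proof -
  consider "t = 0" | "t = 1" | "0 < t \<and> t < 1" using assms(2,3) by linarith
  then show ?thesis using assms(1) unfolding convex_fun_def by cases (auto simp: zero_ereal_def[symmetric])
qed

lemma convex_fun_convex_sublevel:
  assumes "convex_fun f"
  shows "convex {x. f x \<le> ereal c}"
  unfolding convex_alt
proof (intro ballI allI impI)
  fix x y and t :: real
  assume "x \<in> {x. f x \<le> ereal c}" "y \<in> {x. f x \<le> ereal c}" and t: "0 \<le> t \<and> t \<le> 1"
  then have "f x \<le> ereal c" "f y \<le> ereal c" by auto
  have "f ((1 - t) *\<^sub>R x + t *\<^sub>R y) \<le> ereal (1 - t) * f x + ereal t * f y"
    using assms t by (intro convex_funD) auto
  also have "\<dots> \<le> ereal (1 - t) * ereal c + ereal t * ereal c"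
    using \<open>f x \<le> _\<close> \<open>f y \<le> _\<close> t by (intro add_mono ereal_mult_left_mono) auto
  also have "\<dots> = ereal c"
    by (simp add: algebra_simps)
  finally show "(1 - t) *\<^sub>R x + t *\<^sub>R y \<in> {x. f x \<le> ereal c}" by simp
qed

lemma convex_fun_convex_domain:
  assumes "convex_fun f"
  shows "convex {x. f x < \<infinity>}"
  unfolding convex_alt
proof (intro ballI allI impI)
  fix x y and t :: real
  assume "x \<in> {x. f x < \<infinity>}" "y \<in> {x. f x < \<infinity>}" "0 \<le> t \<and> t \<le> 1"
  then obtain m n where "f x < ereal (real m)" "f y < ereal (real n)"
    using less_PInf_Ex_of_nat[of "f x"] less_PInf_Ex_of_nat[of "f y"] by auto
  then have "f x \<le> ereal (real (max m n))" "f y \<le> ereal (real (max m n))"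
    by (auto intro: order.trans[OF less_imp_le])
  then have "f ((1 - t) *\<^sub>R x + t *\<^sub>R y) \<le> ereal (real (max m n))"
    using convex_fun_convex_sublevel[OF assms] \<open>0 \<le> t \<and> t \<le> 1\<close> unfolding convex_alt by blast
  then show "(1 - t) *\<^sub>R x + t *\<^sub>R y \<in> {x. f x < \<infinity>}"
    by (auto intro: le_less_trans)
qed

lemma lsc_fun_borel_measurable:
  fixes u :: "'a::metric_space \<Rightarrow> ereal"
  assumes "lsc_fun u"
  shows "u \<in> borel_measurable borel"
proof (rule borel_measurableI_le)
  fix c
  have "closed {x. u x \<le> c}"
    unfolding closed_sequential_limits
  proof (intro allI impI, elim conjE)
    fix xs l assume "\<forall>n. xs n \<in> {x. u x \<le> c}" "xs \<longlonglongrightarrow> l"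
    then have "u l \<le> liminf (\<lambda>k. u (xs k))"
      using assms unfolding lsc_fun_def by blast
    also have "\<dots> \<le> c"
      using \<open>\<forall>n. xs n \<in> _\<close> by (intro Liminf_le) auto
    finally show "l \<in> {x. u x \<le> c}" by simp
  qed
  then show "{x \<in> space borel. u x \<le> c} \<in> sets borel" by simp
qed

lemma borel_measurable_zeta_ext[measurable]:
  assumes "continuous_on UNIV \<zeta>" "f \<in> borel_measurable M"
  shows "(\<lambda>x. zeta_ext \<zeta> (f x)) \<in> borel_measurable M"
proof -
  have [measurable]: "\<zeta> \<in> borel_measurable borel"
    using assms(1) by (rule borel_measurable_continuous_onI)
  have "zeta_ext \<zeta> s = (if \<bar>s\<bar> = \<infinity> then 0 else \<zeta> (real_of_ereal s))" for s
    by (cases s) (auto simp: zeta_ext_def)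
  then show ?thesis
    using assms(2) by simp
qed

lemma abs_zeta_ext_le:
  assumes "antimono \<zeta>" "\<And>t. 0 \<le> \<zeta> t" "ereal t \<le> s"
  shows "\<bar>zeta_ext \<zeta> s\<bar> \<le> \<zeta> t"
  using assms by (cases s) (auto simp: zeta_ext_def antimono_def)

lemma tendsto_zeta_ext:
  fixes f :: "'b \<Rightarrow> ereal"
  assumes "(\<zeta> \<longlongrightarrow> 0) at_top" "continuous_on UNIV \<zeta>" "(f \<longlongrightarrow> l) F" "l \<noteq> -\<infinity>"
  shows "((\<lambda>x. zeta_ext \<zeta> (f x)) \<longlongrightarrow> zeta_ext \<zeta> l) F"
proof (cases l)
  case (real a)
  have "\<forall>\<^sub>F x in F. ereal (a - 1) < f x" "\<forall>\<^sub>F x in F. f x < ereal (a + 1)"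
    using assms(3) unfolding real by (auto intro: order_tendstoD)
  then have "\<forall>\<^sub>F x in F. \<zeta> (real_of_ereal (f x)) = zeta_ext \<zeta> (f x)"
    by eventually_elim (auto simp: zeta_ext_def split: ereal.split)
  moreover have "((\<lambda>x. \<zeta> (real_of_ereal (f x))) \<longlongrightarrow> \<zeta> a) F"
    using assms(2,3) unfolding real
    by (intro isCont_tendsto_compose[OF _ lim_real_of_ereal]) (auto simp: continuous_on_eq_continuous_at)
  ultimately show ?thesis
    unfolding real zeta_ext_def by (auto intro: Lim_transform_eventually)
next
  case PInf
  show ?thesis
  proof (rule tendstoI)
    fix e :: real assume "0 < e"
    then obtain T where T: "\<And>t. T \<le> t \<Longrightarrow> dist (\<zeta> t) 0 < e"
      using assms(1) unfolding tendsto_iff eventually_at_top_linorder by blast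
    have "\<forall>\<^sub>F x in F. ereal T < f x"
      using assms(3) unfolding PInf by (rule order_tendstoD) simp
    then show "\<forall>\<^sub>F x in F. dist (zeta_ext \<zeta> (f x)) (zeta_ext \<zeta> l) < e"
    proof (rule eventually_mono)
      fix x assume "ereal T < f x"
      then show "dist (zeta_ext \<zeta> (f x)) (zeta_ext \<zeta> l) < e"
        using T \<open>0 < e\<close> PInf by (cases "f x") (auto simp: zeta_ext_def)
    qed
  qed
qed (use assms(4) in simp)

lemma epi_converges_liminf:
  assumes "epi_converges us u" "xs \<longlonglongrightarrow> x"
  shows "u x \<le> liminf (\<lambda>k. us k (xs k))"
  using assms unfolding epi_converges_def by blast

lemma epi_converges_recovery:
  assumes "epi_converges us u" "u x < ereal B"
  obtains xs where "xs \<longlonglongrightarrow> x" "\<forall>\<^sub>F k in sequentially. us k (xs k) < ereal B"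
proof -
  obtain xs where "xs \<longlonglongrightarrow> x" "limsup (\<lambda>k. us k (xs k)) \<le> u x"
    using assms(1) unfolding epi_converges_def by blast
  with assms(2) show ?thesis
    by (intro that Limsup_lessD) auto
qed

lemma epi_converges_recovery_finite:
  assumes "epi_converges us u" "u x \<noteq> \<infinity>"
  obtains xs B where "xs \<longlonglongrightarrow> x" "\<forall>\<^sub>F k in sequentially. us k (xs k) < ereal B"
proof -
  obtain n :: nat where "u x < ereal (real n)"
    using assms(2) less_PInf_Ex_of_nat by auto
  then obtain xs where "xs \<longlonglongrightarrow> x" "\<forall>\<^sub>F k in sequentially. us k (xs k) < ereal (real n)"
    by (rule epi_converges_recovery[OF assms(1)])
  then show ?thesis
    by (rule that)
qed

lemma epi_converges_liminf_subseq:
  assumes epi: "epi_converges us u" and "strict_mono r" "ys \<longlonglongrightarrow> y"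
  shows "u y \<le> liminf (\<lambda>m. us (r m) (ys m))"
proof -
  define zs where "zs k = (if k \<in> range r then ys (inv r k) else y)" for k
  have zs_r: "zs (r m) = ys m" for m
    using strict_mono_imp_inj_on[OF \<open>strict_mono r\<close>] by (simp add: zs_def)
  have "zs \<longlonglongrightarrow> y"
  proof (rule tendstoI)
    fix e :: real assume "0 < e"
    then obtain N where N: "\<And>m. N \<le> m \<Longrightarrow> dist (ys m) y < e"
      using \<open>ys \<longlonglongrightarrow> y\<close> unfolding lim_sequentially by blast
    have "dist (zs k) y < e" if "r N \<le> k" for k
    proof (cases "k \<in> range r")
      case True
      then obtain m where "k = r m" by auto
      with that \<open>strict_mono r\<close> have "N \<le> m" by (simp add: strict_mono_less_eq)
      then show ?thesis using N \<open>k = r m\<close> zs_r by simp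
    qed (use \<open>0 < e\<close> in \<open>simp add: zs_def\<close>)
    then show "\<forall>\<^sub>F k in sequentially. dist (zs k) y < e"
      unfolding eventually_sequentially by blast
  qed
  then have "u y \<le> liminf (\<lambda>k. us k (zs k))"
    by (rule epi_converges_liminf[OF epi])
  also have "\<dots> \<le> liminf ((\<lambda>k. us k (zs k)) \<circ> r)"
    by (rule liminf_subseq_mono[OF \<open>strict_mono r\<close>])
  finally show ?thesis
    by (simp add: o_def zs_r)
qed

lemma epi_converges_eventually_greater_on_compact:
  fixes us :: "nat \<Rightarrow> 'a::metric_space \<Rightarrow> ereal"
  assumes epi: "epi_converges us u" and "compact C" and less: "\<And>y. y \<in> C \<Longrightarrow> ereal L < u y"
  shows "\<forall>\<^sub>F k in sequentially. \<forall>y\<in>C. ereal L < us k y"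
proof (rule ccontr)
  assume "\<not> ?thesis"
  then have "\<exists>\<^sub>F k in cofinite. \<exists>y\<in>C. us k y \<le> ereal L"
    by (simp add: cofinite_eq_sequentially not_eventually not_less)
  then have "infinite {k. \<exists>y\<in>C. us k y \<le> ereal L}"
    by (simp add: frequently_cofinite)
  then obtain r :: "nat \<Rightarrow> nat" where "strict_mono r" "\<And>m. \<exists>y\<in>C. us (r m) y \<le> ereal L"
    by (auto dest: infinite_enumerate)
  then obtain ys where ys: "\<And>m. ys m \<in> C" "\<And>m. us (r m) (ys m) \<le> ereal L"
    by metis
  obtain y s where "y \<in> C" "strict_mono s" "(ys \<circ> s) \<longlonglongrightarrow> y"
    using seq_compactE[OF compact_imp_seq_compact[OF \<open>compact C\<close>], of ys] ys(1) by blast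
  have "u y \<le> liminf (\<lambda>m. us ((r \<circ> s) m) ((ys \<circ> s) m))"
    using epi strict_mono_o[OF \<open>strict_mono r\<close> \<open>strict_mono s\<close>] \<open>(ys \<circ> s) \<longlonglongrightarrow> y\<close>
    by (rule epi_converges_liminf_subseq)
  also have "\<dots> \<le> ereal L"
    using ys(2) by (intro Liminf_le) auto
  finally show False
    using less[OF \<open>y \<in> C\<close>] by simp
qed

lemma lsc_fun_bounded_below_on_compact:
  fixes u :: "'a::metric_space \<Rightarrow> ereal"
  assumes "lsc_fun u" "\<And>x. u x \<noteq> -\<infinity>" "compact C"
  obtains L where "\<And>y. y \<in> C \<Longrightarrow> ereal L < u y"
proof -
  have "\<exists>L. \<forall>y\<in>C. ereal L < u y"
  proof (rule ccontr)
    assume "\<nexists>L. \<forall>y\<in>C. ereal L < u y"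
    then have "\<forall>m::nat. \<exists>y\<in>C. u y \<le> ereal (- real m)"
      by (auto simp: not_less)
    then obtain ys where ys: "\<And>m. ys m \<in> C" "\<And>m. u (ys m) \<le> ereal (- real m)"
      by metis
    obtain y s where "y \<in> C" "strict_mono s" "(ys \<circ> s) \<longlonglongrightarrow> y"
      using seq_compactE[OF compact_imp_seq_compact[OF \<open>compact C\<close>], of ys] ys(1) by blast
    have le: "u y \<le> ereal (- real N)" for N
    proof -
      have "u y \<le> liminf (\<lambda>m. u ((ys \<circ> s) m))"
        using assms(1) \<open>(ys \<circ> s) \<longlonglongrightarrow> y\<close> unfolding lsc_fun_def by blast
      also have "\<dots> \<le> ereal (- real N)"
      proof (intro Liminf_le eventually_sequentiallyI)
        fix m assume "N \<le> m"
        then have "real N \<le> real (s m)"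
          using seq_suble[OF \<open>strict_mono s\<close>, of m] by linarith
        then show "u ((ys \<circ> s) m) \<le> ereal (- real N)"
          using ys(2)[of "s m"] by (auto elim: order.trans)
      qed simp
      finally show ?thesis .
    qed
    obtain N :: nat where "- real_of_ereal (u y) < real N"
      using reals_Archimedean2 by blast
    then show False
      using le[of N] assms(2)[of y] by (cases "u y") auto
  qed
  then show ?thesis
    using that by blast
qed

lemma segment_crosses_sphere:
  fixes x y :: "'a::real_normed_vector"
  assumes "norm x < R" "R < norm y"
  obtains t where "0 < t" "t < 1" "norm ((1 - t) *\<^sub>R x + t *\<^sub>R y) = R"
proof -
  define g where "g t = norm ((1 - t) *\<^sub>R x + t *\<^sub>R y)" for t
  have "continuous_on {0..1} g"
    unfolding g_def by (intro continuous_intros)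
  moreover have "g 0 \<le> R" "R \<le> g 1"
    using assms by (auto simp: g_def)
  ultimately obtain t where "0 \<le> t" "t \<le> 1" "g t = R"
    using IVT'[of g 0 R 1] by auto
  moreover have "t \<noteq> 0" "t \<noteq> 1"
    using assms \<open>g t = R\<close> by (auto simp: g_def)
  ultimately show ?thesis
    by (intro that[of t]) (auto simp: g_def)
qed

lemma convex_fun_lower_bound_outside_sphere:
  fixes f :: "'a::real_normed_vector \<Rightarrow> ereal"
  assumes "convex_fun f" "norm z < R" "f z \<le> ereal a"
    and sphere: "\<And>w. norm w = R \<Longrightarrow> ereal b \<le> f w" and "a \<le> b" and "R \<le> norm y"
  shows "ereal (a + (b - a) * (norm y - R) / (2 * R)) \<le> f y"
proof (cases "norm y = R")
  case True
  then show ?thesis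
    using sphere[of y] \<open>a \<le> b\<close> by (auto elim: order.trans[rotated])
next
  case False
  with \<open>R \<le> norm y\<close> have "R < norm y" by simp
  have "0 < R"
    using norm_ge_zero[of z] \<open>norm z < R\<close> by linarith
  obtain t where t: "0 < t" "t < 1" and w: "norm ((1 - t) *\<^sub>R z + t *\<^sub>R y) = R"
    using \<open>norm z < R\<close> \<open>R < norm y\<close> by (rule segment_crosses_sphere)
  define w where "w = (1 - t) *\<^sub>R z + t *\<^sub>R y"
  have "ereal b \<le> f w"
    using sphere w unfolding w_def by blast
  also have "\<dots> \<le> ereal (1 - t) * f z + ereal t * f y"
    unfolding w_def using assms(1) t by (intro convex_funD) auto
  also have "\<dots> \<le> ereal (1 - t) * ereal a + ereal t * f y"
    using \<open>f z \<le> ereal a\<close> t by (intro add_right_mono ereal_mult_left_mono) auto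
  finally have le: "ereal b \<le> ereal (1 - t) * ereal a + ereal t * f y" .
  show ?thesis
  proof (cases "f y")
    case (real v)
    have "b \<le> (1 - t) * a + t * v"
      using le real by simp
    have "t * (norm y - R) \<le> t * norm (y - z)"
      using norm_triangle_ineq2[of y z] \<open>norm z < R\<close> t by (intro mult_left_mono) auto
    also have "\<dots> = norm (w - z)"
      using t by (simp add: w_def algebra_simps flip: scaleR_diff_right)
    also have "\<dots> < 2 * R"
      using norm_triangle_ineq4[of w z] w \<open>norm z < R\<close> unfolding w_def by linarith
    finally have "t * (norm y - R) < 2 * R" .
    then have "(b - a) * (t * (norm y - R)) \<le> (b - a) * (2 * R)"
      using \<open>a \<le> b\<close> by (intro mult_left_mono) auto
    moreover have "(b - a) * (2 * R) \<le> t * (v - a) * (2 * R)"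
      using \<open>b \<le> (1 - t) * a + t * v\<close> \<open>0 < R\<close> by (intro mult_right_mono) (auto simp: algebra_simps)
    ultimately have "t * ((b - a) * (norm y - R)) \<le> t * ((v - a) * (2 * R))"
      by (simp add: algebra_simps)
    then have "(b - a) * (norm y - R) \<le> (v - a) * (2 * R)"
      using t by simp
    then show ?thesis
      using real \<open>0 < R\<close> by (simp add: field_simps)
  next
    case MInf
    then show ?thesis
      using le t by simp
  qed simp
qed

lemma convex_fun_above_cone:
  fixes f :: "'a::real_normed_vector \<Rightarrow> ereal"
  assumes "convex_fun f" "norm z < R" "f z \<le> ereal c"
    and sphere: "\<And>w. norm w = R \<Longrightarrow> ereal (c + 2) \<le> f w"
    and ball: "\<And>w. norm w \<le> R \<Longrightarrow> ereal L \<le> f w"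
  shows "ereal (min (c - 1) (L - 1) + norm y / R) \<le> f y"
proof -
  have "0 < R"
    using norm_ge_zero[of z] \<open>norm z < R\<close> by linarith
  show ?thesis
  proof (cases "norm y \<le> R")
    case True
    then have "norm y / R \<le> 1"
      using \<open>0 < R\<close> by simp
    then have "min (c - 1) (L - 1) + norm y / R \<le> L"
      by linarith
    then show ?thesis
      using ball[OF True] by (meson ereal_less_eq(3) order.trans)
  next
    case False
    then have "ereal (c + (c + 2 - c) * (norm y - R) / (2 * R)) \<le> f y"
      by (intro convex_fun_lower_bound_outside_sphere[OF assms(1-3) sphere]) auto
    moreover have "c + (c + 2 - c) * (norm y - R) / (2 * R) = c - 1 + norm y / R"
      using \<open>0 < R\<close> by (simp add: field_simps)
    moreover have "min (c - 1) (L - 1) + norm y / R \<le> c - 1 + norm y / R"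
      by simp
    ultimately show ?thesis
      by (metis ereal_less_eq(3) order.trans)
  qed
qed

lemma epi_converges_uniformly_coercive:
  fixes us :: "nat \<Rightarrow> 'a::euclidean_space \<Rightarrow> ereal"
  assumes epi: "epi_converges us u" and uk: "\<And>k. us k \<in> Conv_coe" and u: "u \<in> Conv_coe"
  obtains \<alpha> \<beta> K where "0 < \<beta>" "\<And>k y. K \<le> k \<Longrightarrow> ereal (\<alpha> + \<beta> * norm y) \<le> us k y"
proof -
  obtain x0 where "u x0 \<noteq> \<infinity>"
    using Conv_coeD(2)[OF u] by blast
  then obtain xs c where "xs \<longlonglongrightarrow> x0" and ev_xs: "\<forall>\<^sub>F k in sequentially. us k (xs k) < ereal c"
    by (rule epi_converges_recovery_finite[OF epi])
  have "\<forall>\<^sub>F y in at_infinity. ereal (c + 2) < u y"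
    using Conv_coeD(5)[OF u] unfolding coercive_fun_def tendsto_PInfty by blast
  then obtain b where b: "\<And>y. b \<le> norm y \<Longrightarrow> ereal (c + 2) < u y"
    unfolding eventually_at_infinity by blast
  define R where "R = max b (norm x0 + 1)"
  have "norm x0 < R"
    by (simp add: R_def)
  then have "0 < R"
    using norm_ge_zero[of x0] by linarith
  obtain L where L: "\<And>y. y \<in> cball 0 R \<Longrightarrow> ereal L < u y"
    using lsc_fun_bounded_below_on_compact[OF Conv_coeD(3,1)[OF u] compact_cball] by blast
  note ev_xs
  moreover have "\<forall>\<^sub>F k in sequentially. norm (xs k) < R"
    using tendsto_norm[OF \<open>xs \<longlonglongrightarrow> x0\<close>] \<open>norm x0 < R\<close> by (rule order_tendstoD)
  moreover have "\<forall>\<^sub>F k in sequentially. \<forall>y\<in>sphere 0 R. ereal (c + 2) < us k y"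
    using b by (intro epi_converges_eventually_greater_on_compact[OF epi]) (auto simp: R_def)
  moreover have "\<forall>\<^sub>F k in sequentially. \<forall>y\<in>cball 0 R. ereal L < us k y"
    using L by (intro epi_converges_eventually_greater_on_compact[OF epi]) auto
  ultimately have "\<forall>\<^sub>F k in sequentially. \<forall>y. ereal (min (c - 1) (L - 1) + norm y / R) \<le> us k y"
  proof eventually_elim
    case (elim k)
    then show ?case
      by (intro allI convex_fun_above_cone[OF Conv_coeD(4)[OF uk], of "xs k"]) (auto intro: less_imp_le)
  qed
  then obtain K where "\<And>k y. K \<le> k \<Longrightarrow> ereal (min (c - 1) (L - 1) + (1 / R) * norm y) \<le> us k y"
    unfolding eventually_sequentially by auto
  moreover have "0 < 1 / R"
    using \<open>0 < R\<close> by simp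
  ultimately show ?thesis
    using that by blast
qed

definition cross_vertices :: "'a::euclidean_space \<Rightarrow> real \<Rightarrow> 'a set" where
  "cross_vertices x \<delta> = (\<lambda>i. x + \<delta> *\<^sub>R i) ` Basis \<union> (\<lambda>i. x - \<delta> *\<^sub>R i) ` Basis"

lemma finite_cross_vertices: "finite (cross_vertices x \<delta>)"
  by (simp add: cross_vertices_def)

lemma dist_cross_vertices: "v \<in> cross_vertices x \<delta> \<Longrightarrow> dist x v = \<bar>\<delta>\<bar>"
  by (auto simp: cross_vertices_def dist_norm)

lemma exists_Basis_abs_inner_ge:
  fixes a :: "'a::euclidean_space"
  shows "\<exists>i\<in>Basis. norm a / DIM('a) \<le> \<bar>a \<bullet> i\<bar>"
proof (rule ccontr)
  assume "\<not> ?thesis"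
  then have "(\<Sum>i\<in>Basis. \<bar>a \<bullet> i\<bar>) < (\<Sum>i\<in>(Basis::'a set). norm a / DIM('a))"
    by (intro sum_strict_mono) (auto simp: not_le)
  then show False
    using norm_le_l1[of a] by simp
qed

text \<open>A point of the ball outside the hull would be separated from it by a hyperplane with
  some normal \<open>a\<close>; the perturbation of the vertex lying a distance \<open>\<delta>\<close> from \<open>x\<close> along the
  largest coordinate of \<open>-a\<close> would then be on the wrong side.\<close>
lemma ball_subset_convex_hull_perturbed_cross:
  fixes x :: "'a::euclidean_space" and \<delta> :: real
  defines "\<rho> \<equiv> \<delta> / (2 * real DIM('a))"
  assumes "0 < \<delta>" and near: "\<And>v. v \<in> cross_vertices x \<delta> \<Longrightarrow> dist (w v) v < \<rho>"
  shows "ball x \<rho> \<subseteq> convex hull (w ` cross_vertices x \<delta>)"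
proof
  fix z assume z: "z \<in> ball x \<rho>"
  show "z \<in> convex hull (w ` cross_vertices x \<delta>)"
  proof (rule ccontr)
    assume "z \<notin> convex hull (w ` cross_vertices x \<delta>)"
    moreover have "closed (convex hull (w ` cross_vertices x \<delta>))"
      by (intro compact_imp_closed compact_convex_hull finite_imp_compact finite_imageI
          finite_cross_vertices)
    ultimately obtain a b where ab: "a \<bullet> z < b" "\<And>y. y \<in> convex hull (w ` cross_vertices x \<delta>) \<Longrightarrow> b < a \<bullet> y"
      using separating_hyperplane_closed_point[OF convex_convex_hull] by blast
    obtain i where i: "i \<in> Basis" "norm a / DIM('a) \<le> \<bar>a \<bullet> i\<bar>"
      using exists_Basis_abs_inner_ge by blast
    define v where "v = (if 0 \<le> a \<bullet> i then x - \<delta> *\<^sub>R i else x + \<delta> *\<^sub>R i)"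
    have v: "v \<in> cross_vertices x \<delta>"
      using i by (auto simp: v_def cross_vertices_def)
    have "a \<bullet> v = a \<bullet> x - \<delta> * \<bar>a \<bullet> i\<bar>"
      by (auto simp: v_def inner_diff_right inner_add_right)
    moreover have "2 * (norm a * \<rho>) \<le> \<delta> * \<bar>a \<bullet> i\<bar>"
      using mult_left_mono[OF i(2), of \<delta>] \<open>0 < \<delta>\<close> by (simp add: \<rho>_def field_simps)
    moreover have "a \<bullet> (w v - v) \<le> norm a * \<rho>"
    proof -
      have "a \<bullet> (w v - v) \<le> norm a * norm (w v - v)"
        using Cauchy_Schwarz_ineq2[of a "w v - v"] by linarith
      also have "\<dots> \<le> norm a * \<rho>"
        using near[OF v] by (intro mult_left_mono) (auto simp: dist_norm)
      finally show ?thesis .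
    qed
    moreover have "a \<bullet> (x - z) \<le> norm a * \<rho>"
    proof -
      have "a \<bullet> (x - z) \<le> norm a * norm (x - z)"
        using Cauchy_Schwarz_ineq2[of a "x - z"] by linarith
      also have "\<dots> \<le> norm a * \<rho>"
        using z by (intro mult_left_mono) (auto simp: dist_norm)
      finally show ?thesis .
    qed
    moreover have "b < a \<bullet> w v"
      using v by (intro ab(2) hull_inc imageI)
    ultimately show False
      using ab(1) by (simp add: inner_diff_right)
  qed
qed

lemma epi_converges_bounded_above_near_interior:
  fixes us :: "nat \<Rightarrow> 'a::euclidean_space \<Rightarrow> ereal"
  assumes epi: "epi_converges us u" and cvx: "\<And>k. convex_fun (us k)"
    and x: "x \<in> interior {y. u y < \<infinity>}"
  obtains \<rho> M where "0 < \<rho>" "\<forall>\<^sub>F k in sequentially. \<forall>z\<in>ball x \<rho>. us k z \<le> ereal M"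
proof -
  obtain \<delta> where "0 < \<delta>" and \<delta>: "cball x \<delta> \<subseteq> {y. u y < \<infinity>}"
    using x unfolding mem_interior_cball by blast
  define V where "V = cross_vertices x \<delta>"
  define \<rho> where "\<rho> = \<delta> / (2 * real DIM('a))"
  have "finite V"
    unfolding V_def by (rule finite_cross_vertices)
  have "0 < \<rho>"
    using \<open>0 < \<delta>\<close> by (simp add: \<rho>_def)
  have "\<forall>v\<in>V. \<exists>X B. X \<longlonglongrightarrow> v \<and> (\<forall>\<^sub>F k in sequentially. us k (X k) < ereal B)"
  proof
    fix v assume "v \<in> V"
    then have "v \<in> cball x \<delta>"
      using dist_cross_vertices[of v x \<delta>] \<open>0 < \<delta>\<close> by (simp add: V_def)
    then have "u v \<noteq> \<infinity>"
      using \<delta> by auto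
    then obtain X B where "X \<longlonglongrightarrow> v" "\<forall>\<^sub>F k in sequentially. us k (X k) < ereal B"
      by (rule epi_converges_recovery_finite[OF epi])
    then show "\<exists>X B. X \<longlonglongrightarrow> v \<and> (\<forall>\<^sub>F k in sequentially. us k (X k) < ereal B)"
      by blast
  qed
  then obtain X B where XB: "\<And>v. v \<in> V \<Longrightarrow> X v \<longlonglongrightarrow> v \<and> (\<forall>\<^sub>F k in sequentially. us k (X v k) < ereal (B v))"
    by metis
  define M where "M = Max (B ` V)"
  have "\<forall>\<^sub>F k in sequentially. \<forall>v\<in>V. us k (X v k) \<le> ereal M \<and> dist (X v k) v < \<rho>"
  proof (rule eventually_ball_finite[OF \<open>finite V\<close>], rule ballI)
    fix v assume "v \<in> V"
    have "B v \<le> M"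
      unfolding M_def using \<open>finite V\<close> \<open>v \<in> V\<close> by simp
    then have "\<forall>\<^sub>F k in sequentially. us k (X v k) \<le> ereal M"
      using XB[OF \<open>v \<in> V\<close>] by (auto elim!: eventually_mono intro: order.trans[OF less_imp_le])
    moreover have "\<forall>\<^sub>F k in sequentially. dist (X v k) v < \<rho>"
      using XB[OF \<open>v \<in> V\<close>] \<open>0 < \<rho>\<close> by (auto intro: tendstoD)
    ultimately show "\<forall>\<^sub>F k in sequentially. us k (X v k) \<le> ereal M \<and> dist (X v k) v < \<rho>"
      by (rule eventually_conj)
  qed
  then have "\<forall>\<^sub>F k in sequentially. \<forall>z\<in>ball x \<rho>. us k z \<le> ereal M"
  proof eventually_elim
    case (elim k)
    have "ball x \<rho> \<subseteq> convex hull ((\<lambda>v. X v k) ` V)"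
      unfolding \<rho>_def V_def
      by (rule ball_subset_convex_hull_perturbed_cross[OF \<open>0 < \<delta>\<close>])
        (use elim in \<open>simp add: V_def \<rho>_def\<close>)
    also have "\<dots> \<subseteq> {z. us k z \<le> ereal M}"
      using elim by (intro hull_minimal convex_fun_convex_sublevel cvx) auto
    finally show ?case
      by blast
  qed
  with \<open>0 < \<rho>\<close> show ?thesis
    by (rule that)
qed

lemma exists_small_convex_weight:
  fixes a b c :: real
  assumes "a < b"
  obtains t where "0 < t" "t < 1" "(1 - t) * a + t * c < b"
proof -
  have "((\<lambda>t. (1 - t) * a + t * c) \<longlongrightarrow> (1 - 0) * a + 0 * c) (at_right 0)"
    by (intro tendsto_intros)
  then have "\<forall>\<^sub>F t in at_right 0. (1 - t) * a + t * c < b"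
    using assms by (intro order_tendstoD) auto
  moreover have "\<forall>\<^sub>F t in at_right 0. 0 < t \<and> t < (1::real)"
    unfolding eventually_at_right_field by (auto intro: exI[of _ 1])
  ultimately show ?thesis
    using that eventually_happens'[OF trivial_limit_at_right_real] eventually_conj by blast
qed

lemma epi_converges_limsup_le_interior:
  fixes us :: "nat \<Rightarrow> 'a::euclidean_space \<Rightarrow> ereal"
  assumes epi: "epi_converges us u" and cvx: "\<And>k. convex_fun (us k)"
    and x: "x \<in> interior {y. u y < \<infinity>}"
  shows "limsup (\<lambda>k. us k x) \<le> u x"
proof (rule dense_ge)
  fix c assume "u x < c"
  then obtain B' where "u x < ereal B'" "ereal B' < c"
    using ereal_dense2 by blast
  show "limsup (\<lambda>k. us k x) \<le> c"
  proof (cases c)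
    case (real B)
    obtain \<rho> M where "0 < \<rho>" and ev_M: "\<forall>\<^sub>F k in sequentially. \<forall>z\<in>ball x \<rho>. us k z \<le> ereal M"
      using epi_converges_bounded_above_near_interior[OF epi cvx x] by blast
    obtain xs where "xs \<longlonglongrightarrow> x" and ev_xs: "\<forall>\<^sub>F k in sequentially. us k (xs k) < ereal B'"
      using epi_converges_recovery[OF epi \<open>u x < ereal B'\<close>] by blast
    have "B' < B"
      using \<open>ereal B' < c\<close> real by simp
    then obtain t where t: "0 < t" "t < 1" and "(1 - t) * B' + t * M < B"
      by (rule exists_small_convex_weight)
    txt \<open>\<open>x\<close> is the convex combination \<open>(1 - t) xs k + t zs k\<close> of the recovery point and a
      point close to \<open>x\<close>, where the \<open>us k\<close> are bounded by \<open>M\<close>.\<close>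
    define zs where "zs k = x + ((1 - t) / t) *\<^sub>R (x - xs k)" for k
    have "zs \<longlonglongrightarrow> x + ((1 - t) / t) *\<^sub>R (x - x)"
      unfolding zs_def by (intro tendsto_intros \<open>xs \<longlonglongrightarrow> x\<close>)
    then have "\<forall>\<^sub>F k in sequentially. dist (zs k) x < \<rho>"
      using \<open>0 < \<rho>\<close> by (intro tendstoD) auto
    with ev_xs ev_M have "\<forall>\<^sub>F k in sequentially. us k x \<le> c"
    proof eventually_elim
      case (elim k)
      have "t *\<^sub>R zs k = t *\<^sub>R x + (1 - t) *\<^sub>R (x - xs k)"
        using t by (simp add: zs_def scaleR_add_right)
      then have "x = (1 - t) *\<^sub>R xs k + t *\<^sub>R zs k"
        by (simp add: algebra_simps)
      then have "us k x \<le> ereal (1 - t) * us k (xs k) + ereal t * us k (zs k)"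
        using convex_funD[OF cvx, of t k "xs k" "zs k"] t by simp
      also have "\<dots> \<le> ereal (1 - t) * ereal B' + ereal t * ereal M"
        using elim t by (intro add_mono ereal_mult_left_mono) (auto simp: dist_commute)
      also have "\<dots> \<le> c"
        using \<open>(1 - t) * B' + t * M < B\<close> real by simp
      finally show ?case .
    qed
    then show ?thesis
      by (intro Limsup_bounded) auto
  qed (use \<open>ereal B' < c\<close> in auto)
qed

lemma epi_converges_tendsto_off_frontier:
  fixes us :: "nat \<Rightarrow> 'a::euclidean_space \<Rightarrow> ereal"
  assumes epi: "epi_converges us u" and cvx: "\<And>k. convex_fun (us k)"
    and x: "x \<notin> frontier {y. u y < \<infinity>}"
  shows "(\<lambda>k. us k x) \<longlonglongrightarrow> u x"
proof -
  have liminf: "u x \<le> liminf (\<lambda>k. us k x)"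
    using epi_converges_liminf[OF epi tendsto_const] .
  show ?thesis
  proof (cases "x \<in> interior {y. u y < \<infinity>}")
    case True
    then have limsup: "limsup (\<lambda>k. us k x) \<le> u x"
      by (rule epi_converges_limsup_le_interior[OF epi cvx])
    have le: "liminf (\<lambda>k. us k x) \<le> limsup (\<lambda>k. us k x)"
      by (rule Liminf_le_Limsup) simp
    show ?thesis
    proof (rule Liminf_eq_Limsup)
      show "liminf (\<lambda>k. us k x) = u x"
        using order.trans[OF le limsup] liminf by (rule order.antisym)
      show "limsup (\<lambda>k. us k x) = u x"
        using limsup order.trans[OF liminf le] by (rule order.antisym)
    qed simp
  next
    case False
    with x have "x \<notin> closure {y. u y < \<infinity>}"
      by (simp add: frontier_def)
    then have "x \<notin> {y. u y < \<infinity>}"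
      using closure_subset[of "{y. u y < \<infinity>}"] by blast
    then have "u x = \<infinity>"
      by (cases "u x") auto
    with liminf have "liminf (\<lambda>k. us k x) = \<infinity>"
      by simp
    with \<open>u x = \<infinity>\<close> show ?thesis
      by (simp add: Liminf_PInfty)
  qed
qed

lemma epi_converges_AE_tendsto:
  fixes us :: "nat \<Rightarrow> 'a::euclidean_space \<Rightarrow> ereal"
  assumes epi: "epi_converges us u" and cvx: "\<And>k. convex_fun (us k)" "convex_fun u"
  shows "AE x in lborel. (\<lambda>k. us k x) \<longlonglongrightarrow> u x"
proof (rule AE_I')
  show "frontier {y. u y < \<infinity>} \<in> null_sets lborel"
    using negligible_convex_frontier[OF convex_fun_convex_domain[OF cvx(2)]]
    by (auto simp: negligible_iff_null_sets null_sets_completion_iff)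
  show "{x \<in> space lborel. \<not> (\<lambda>k. us k x) \<longlonglongrightarrow> u x} \<subseteq> frontier {y. u y < \<infinity>}"
    using epi_converges_tendsto_off_frontier[OF epi cvx(1)] by blast
qed

lemma borel_measurable_antimono:
  fixes f :: "real \<Rightarrow> real"
  assumes "antimono f"
  shows "f \<in> borel_measurable borel"
proof -
  have "mono (\<lambda>t. - f t)"
    using assms by (simp add: mono_def antimono_def)
  then have "(\<lambda>t. - (- f t)) \<in> borel_measurable borel"
    by (intro borel_measurable_uminus borel_measurable_mono)
  then show ?thesis
    by simp
qed

lemma power_Suc_diff_le:
  fixes x :: real
  assumes "0 \<le> x"
  shows "(x + 1) ^ Suc m - x ^ Suc m \<le> real (Suc m) * (x + 1) ^ m"
proof (induction m)
  case (Suc m)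
  have "(x + 1) ^ Suc (Suc m) - x ^ Suc (Suc m) = (x + 1) ^ Suc m + x * ((x + 1) ^ Suc m - x ^ Suc m)"
    by (simp add: algebra_simps)
  also have "\<dots> \<le> (x + 1) ^ Suc m + (x + 1) * (real (Suc m) * (x + 1) ^ m)"
    using Suc assms power_mono[of x "x + 1" "Suc m"] by (intro add_left_mono mult_mono) auto
  finally show ?case
    by (simp add: algebra_simps)
qed simp

lemma emeasure_annulus_le:
  fixes r :: real
  assumes "0 \<le> r"
  shows "emeasure lborel (ball (0::'a::euclidean_space) (r * (real j + 1)) - ball 0 (r * real j))
    \<le> ennreal (unit_ball_vol DIM('a) * r ^ DIM('a) * DIM('a) * (real j + 1) ^ (DIM('a) - 1))"
proof -
  define V where "V = unit_ball_vol DIM('a) * r ^ DIM('a)"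
  have "0 \<le> V"
    using assms by (simp add: V_def)
  obtain m where m: "DIM('a) = Suc m"
    using DIM_positive[where 'a='a] by (cases "DIM('a)") auto
  have "ball (0::'a) (r * real j) \<subseteq> ball 0 (r * (real j + 1))"
    using assms by (intro subset_ball mult_left_mono) auto
  then have "emeasure lborel (ball (0::'a) (r * (real j + 1)) - ball 0 (r * real j))
      = ennreal (V * (real j + 1) ^ DIM('a)) - ennreal (V * real j ^ DIM('a))"
    using assms by (subst emeasure_Diff) (auto simp: emeasure_ball V_def power_mult_distrib mult.assoc)
  also have "\<dots> = ennreal (V * ((real j + 1) ^ Suc m - real j ^ Suc m))"
    using \<open>0 \<le> V\<close> by (simp add: m ennreal_minus[symmetric] power_mono algebra_simps)
  also have "\<dots> \<le> ennreal (V * (real (Suc m) * (real j + 1) ^ m))"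
    using \<open>0 \<le> V\<close> power_Suc_diff_le[of "real j" m] by (intro ennreal_leI mult_left_mono) auto
  finally show ?thesis
    by (simp add: V_def m mult.assoc)
qed

lemma nn_integral_radial_le_suminf:
  fixes g :: "real \<Rightarrow> real"
  assumes "antimono g" "\<And>t. 0 \<le> g t" "0 < r"
  shows "(\<integral>\<^sup>+y. g (norm (y::'a::euclidean_space)) \<partial>lborel) \<le>
    (\<Sum>j. ennreal (g (r * real j) *
      (unit_ball_vol DIM('a) * r ^ DIM('a) * DIM('a) * (real j + 1) ^ (DIM('a) - 1))))"
proof -
  define S where "S j = ball (0::'a) (r * (real j + 1)) - ball 0 (r * real j)" for j
  have "(\<integral>\<^sup>+y. g (norm (y::'a)) \<partial>lborel) \<le> (\<integral>\<^sup>+y. (\<Sum>j. ennreal (g (r * real j)) * indicator (S j) y) \<partial>lborel)"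
  proof (rule nn_integral_mono)
    fix y :: 'a
    define j where "j = nat \<lfloor>norm y / r\<rfloor>"
    have "real j = \<lfloor>norm y / r\<rfloor>"
      using \<open>0 < r\<close> by (simp add: j_def)
    then have "real j \<le> norm y / r" "norm y / r < real j + 1"
      by linarith+
    then have "r * real j \<le> norm y" "norm y < r * (real j + 1)"
      using \<open>0 < r\<close> by (simp_all add: field_simps)
    then have "y \<in> S j"
      by (simp add: S_def)
    have "ennreal (g (norm y)) \<le> ennreal (g (r * real j))"
      using assms(1) \<open>r * real j \<le> norm y\<close> by (intro ennreal_leI) (simp add: antimono_def)
    also have "\<dots> = (\<Sum>i\<in>{j}. ennreal (g (r * real i)) * indicator (S i) y)"
      using \<open>y \<in> S j\<close> by simp
    also have "\<dots> \<le> (\<Sum>i. ennreal (g (r * real i)) * indicator (S i) y)"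
      by (rule sum_le_suminf) auto
    finally show "ennreal (g (norm y)) \<le> (\<Sum>i. ennreal (g (r * real i)) * indicator (S i) y)" .
  qed
  also have "\<dots> = (\<Sum>j. \<integral>\<^sup>+y. ennreal (g (r * real j)) * indicator (S j) y \<partial>lborel)"
    unfolding S_def
    by (intro nn_integral_suminf borel_measurable_times_ennreal borel_measurable_const
        borel_measurable_indicator sets.Diff) (simp_all add: borel_open)
  also have "\<dots> = (\<Sum>j. ennreal (g (r * real j)) * emeasure lborel (S j))"
    unfolding S_def by (intro suminf_cong nn_integral_cmult_indicator sets.Diff) (simp_all add: borel_open)
  also have "\<dots> \<le> (\<Sum>j. ennreal (g (r * real j)) *
      ennreal (unit_ball_vol DIM('a) * r ^ DIM('a) * DIM('a) * (real j + 1) ^ (DIM('a) - 1)))"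
    unfolding S_def using \<open>0 < r\<close> by (intro suminf_le mult_left_mono emeasure_annulus_le) auto
  also have "\<dots> = (\<Sum>j. ennreal (g (r * real j) *
      (unit_ball_vol DIM('a) * r ^ DIM('a) * DIM('a) * (real j + 1) ^ (DIM('a) - 1))))"
    using assms(2) \<open>0 < r\<close> by (simp add: ennreal_mult)
  finally show ?thesis .
qed

lemma antimono_powr:
  fixes f :: "'a::order \<Rightarrow> real"
  assumes "antimono f" "\<And>t. 0 \<le> f t" "0 \<le> p"
  shows "antimono (\<lambda>t. f t powr p)"
  using assms(2,3) by (intro antimonoI powr_mono2) (auto intro: antimonoD[OF assms(1)])

lemma summable_antimono_of_nn_integral:
  fixes G :: "real \<Rightarrow> real"
  assumes "antimono G" "\<And>t. 0 \<le> G t"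
    and "(\<integral>\<^sup>+ t. ennreal (G t * t ^ m) * indicator {0..} t \<partial>lborel) < \<infinity>"
  shows "summable (\<lambda>i. G (real i + 1) * real i ^ m)"
proof (rule summable_suminf_not_top)
  have [measurable]: "G \<in> borel_measurable borel"
    using assms(1) by (rule borel_measurable_antimono)
  have "(\<Sum>i. ennreal (G (real i + 1) * real i ^ m))
      = (\<Sum>i. \<integral>\<^sup>+ t. ennreal (G (real i + 1) * real i ^ m) * indicator {real i..<real i + 1} t \<partial>lborel)"
    by (simp add: nn_integral_cmult_indicator)
  also have "\<dots> = (\<integral>\<^sup>+ t. (\<Sum>i. ennreal (G (real i + 1) * real i ^ m) * indicator {real i..<real i + 1} t) \<partial>lborel)"
    by (rule nn_integral_suminf[symmetric]) simp
  also have "\<dots> \<le> (\<integral>\<^sup>+ t. ennreal (G t * t ^ m) * indicator {0..} t \<partial>lborel)"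
  proof (rule nn_integral_mono)
    fix t :: real
    show "(\<Sum>i. ennreal (G (real i + 1) * real i ^ m) * indicator {real i..<real i + 1} t)
        \<le> ennreal (G t * t ^ m) * indicator {0..} t"
    proof (cases "0 \<le> t")
      case True
      define j where "j = nat \<lfloor>t\<rfloor>"
      have "real j = \<lfloor>t\<rfloor>"
        using True by (simp add: j_def)
      then have j: "real j \<le> t" "t < real j + 1"
        by linarith+
      have "(\<lambda>i. ennreal (G (real i + 1) * real i ^ m) * indicator {real i..<real i + 1} t)
          = (\<lambda>i. if i = j then ennreal (G (real j + 1) * real j ^ m) else 0)"
        using j by (auto simp: indicator_def fun_eq_iff j_def) linarith+
      then have "(\<Sum>i. ennreal (G (real i + 1) * real i ^ m) * indicator {real i..<real i + 1} t)
          = ennreal (G (real j + 1) * real j ^ m)"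
        using sums_single[of j "\<lambda>_. ennreal (G (real j + 1) * real j ^ m)"] sums_unique by metis
      also have "\<dots> \<le> ennreal (G t * t ^ m)"
        using assms(1,2) j by (intro ennreal_leI mult_mono power_mono) (auto simp: antimono_def)
      finally show ?thesis
        using True by simp
    qed (auto simp: indicator_def)
  qed
  also have "\<dots> < \<infinity>"
    by (rule assms(3))
  finally show "(\<Sum>i. ennreal (G (real i + 1) * real i ^ m)) \<noteq> top"
    by simp
qed (use assms(2) in simp)

lemma summable_antimono_shift:
  fixes G :: "real \<Rightarrow> real"
  assumes "antimono G" "\<And>t. 0 \<le> G t" "summable (\<lambda>i. G (real i + 1) * real i ^ m)"
  shows "summable (\<lambda>j. G (\<alpha> + real j) * (real j + 1) ^ m)"
proof -
  define N where "N = nat \<lceil>\<bar>\<alpha>\<bar>\<rceil> + 1"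
  have "summable (\<lambda>i. G (\<alpha> + real (i + N)) * (real (i + N) + 1) ^ m)"
  proof (rule summable_comparison_test_ev)
    show "\<forall>\<^sub>F i in sequentially. norm (G (\<alpha> + real (i + N)) * (real (i + N) + 1) ^ m)
        \<le> 3 ^ m * (G (real i + 1) * real i ^ m)"
    proof (rule eventually_sequentiallyI)
      fix i assume "N \<le> i"
      have "real i + 1 \<le> \<alpha> + real (i + N)" "real (i + N) + 1 \<le> 3 * real i"
        using \<open>N \<le> i\<close> by (auto simp: N_def) linarith+
      then have "G (\<alpha> + real (i + N)) * (real (i + N) + 1) ^ m \<le> G (real i + 1) * (3 * real i) ^ m"
        using assms(1,2) by (intro mult_mono power_mono) (auto simp: antimono_def)
      then show "norm (G (\<alpha> + real (i + N)) * (real (i + N) + 1) ^ m) \<le> 3 ^ m * (G (real i + 1) * real i ^ m)"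
        using assms(2) by (simp add: power_mult_distrib mult_ac)
    qed
    show "summable (\<lambda>i. 3 ^ m * (G (real i + 1) * real i ^ m))"
      by (intro summable_mult assms(3))
  qed
  then show ?thesis
    by (subst summable_iff_shift[symmetric, of _ N])
qed

lemma integrable_antimono_radial:
  fixes G :: "real \<Rightarrow> real"
  assumes "antimono G" "\<And>t. 0 \<le> G t" "0 < \<beta>"
    and "(\<integral>\<^sup>+ t. ennreal (G t * t ^ (DIM('a) - 1)) * indicator {0..} t \<partial>lborel) < \<infinity>"
  shows "integrable lborel (\<lambda>y::'a::euclidean_space. G (\<alpha> + \<beta> * norm y))"
proof (rule integrableI_nonneg)
  have [measurable]: "G \<in> borel_measurable borel"
    using assms(1) by (rule borel_measurable_antimono)
  show "(\<lambda>y::'a. G (\<alpha> + \<beta> * norm y)) \<in> borel_measurable lborel"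
    by measurable
  show "AE y in lborel. 0 \<le> G (\<alpha> + \<beta> * norm (y::'a))"
    using assms(2) by simp
  define C where "C = unit_ball_vol DIM('a) * (1 / \<beta>) ^ DIM('a) * DIM('a)"
  have "0 \<le> C"
    using \<open>0 < \<beta>\<close> by (simp add: C_def)
  have "antimono (\<lambda>t. G (\<alpha> + \<beta> * t))"
    using \<open>0 < \<beta>\<close> by (intro antimonoI antimonoD[OF assms(1)]) simp
  then have "(\<integral>\<^sup>+y. ennreal (G (\<alpha> + \<beta> * norm (y::'a))) \<partial>lborel)
      \<le> (\<Sum>j. ennreal (G (\<alpha> + \<beta> * (1 / \<beta> * real j)) * (C * (real j + 1) ^ (DIM('a) - 1))))"
    unfolding C_def using assms(2,3)
    by (intro nn_integral_radial_le_suminf[where g="\<lambda>t. G (\<alpha> + \<beta> * t)" and r="1 / \<beta>"]) auto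
  also have "\<dots> = (\<Sum>j. ennreal (C * (G (\<alpha> + real j) * (real j + 1) ^ (DIM('a) - 1))))"
    using \<open>0 < \<beta>\<close> by (simp add: mult_ac)
  also have "\<dots> < \<infinity>"
  proof -
    have "summable (\<lambda>j. C * (G (\<alpha> + real j) * (real j + 1) ^ (DIM('a) - 1)))"
      by (intro summable_mult summable_antimono_shift[OF assms(1,2)]
          summable_antimono_of_nn_integral[OF assms(1,2,4)])
    moreover have "0 \<le> C * (G (\<alpha> + real j) * (real j + 1) ^ (DIM('a) - 1))" for j
      using assms(2) \<open>0 \<le> C\<close> by simp
    ultimately show ?thesis
      by (simp add: ennreal_suminf_neq_top less_top[symmetric])
  qed
  finally show "(\<integral>\<^sup>+y. ennreal (G (\<alpha> + \<beta> * norm (y::'a))) \<partial>lborel) < \<infinity>" .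
qed

lemma antimono_tendsto_zero_at_top:
  fixes \<zeta> :: "real \<Rightarrow> real"
  assumes "antimono \<zeta>" "\<And>t. 0 \<le> \<zeta> t" "0 < p"
    and "(\<integral>\<^sup>+ t. ennreal (\<zeta> t powr p * t ^ m) * indicator {0..} t \<partial>lborel) < \<infinity>"
  shows "(\<zeta> \<longlongrightarrow> 0) at_top"
proof (rule order_tendstoI)
  fix e :: real assume "0 < e"
  have "summable (\<lambda>i. \<zeta> (real i + 1) powr p * real i ^ m)"
    using \<open>0 < p\<close> by (intro summable_antimono_of_nn_integral antimono_powr assms) auto
  then have "(\<lambda>i. \<zeta> (real i + 1) powr p * real i ^ m) \<longlonglongrightarrow> 0"
    by (rule summable_LIMSEQ_zero)
  then have "\<forall>\<^sub>F i in sequentially. \<zeta> (real i + 1) powr p * real i ^ m < e powr p"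
    using \<open>0 < e\<close> by (intro order_tendstoD) auto
  then obtain i where "1 \<le> i" and small: "\<zeta> (real i + 1) powr p * real i ^ m < e powr p"
    unfolding eventually_sequentially by (metis le_add2 max.cobounded2 max_def)
  have "\<zeta> (real i + 1) powr p \<le> \<zeta> (real i + 1) powr p * real i ^ m"
    using \<open>1 \<le> i\<close> by (intro mult_le_cancel_left1[THEN iffD2] one_le_power disjI1 conjI) auto
  with small have "\<zeta> (real i + 1) powr p < e powr p"
    by linarith
  then have "\<not> e \<le> \<zeta> (real i + 1)"
    using powr_mono2[of p e "\<zeta> (real i + 1)"] \<open>0 < p\<close> \<open>0 < e\<close> by auto
  then have "\<zeta> (real i + 1) < e"
    by simp
  then show "\<forall>\<^sub>F t in at_top. \<zeta> t < e"
    unfolding eventually_at_top_linorder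
    using assms(1) by (intro exI[of _ "real i + 1"]) (auto simp: antimono_def intro: le_less_trans)
next
  fix e :: real assume "e < 0"
  then show "\<forall>\<^sub>F t in at_top. e < \<zeta> t"
    using assms(2) by (intro always_eventually allI) (rule less_le_trans)
qed

lemma abs_diff_powr_le:
  fixes a b g p :: real
  assumes "\<bar>a\<bar> \<le> g" "\<bar>b\<bar> \<le> g" "0 \<le> p"
  shows "\<bar>a - b\<bar> powr p \<le> 2 powr p * g powr p"
proof -
  have "\<bar>a - b\<bar> \<le> 2 * g"
    using assms(1,2) by linarith
  then have "\<bar>a - b\<bar> powr p \<le> (2 * g) powr p"
    using assms(3) by (intro powr_mono2) auto
  also have "\<dots> = 2 powr p * g powr p"
    using assms(1) by (simp add: powr_mult)
  finally show ?thesis .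
qed

lemma Lp_dominated_convergence:
  fixes f :: "nat \<Rightarrow> 'a \<Rightarrow> real"
  assumes "0 < p" "\<And>k. f k \<in> borel_measurable M" "l \<in> borel_measurable M"
    and lim: "AE x in M. (\<lambda>k. f k x) \<longlonglongrightarrow> l x"
    and bound: "\<And>k. AE x in M. \<bar>f k x\<bar> \<le> g x"
    and "integrable M (\<lambda>x. g x powr p)"
  shows "\<And>k. integrable M (\<lambda>x. \<bar>f k x - l x\<bar> powr p)"
    and "(\<lambda>k. \<integral>x. \<bar>f k x - l x\<bar> powr p \<partial>M) \<longlonglongrightarrow> 0"
proof -
  have "AE x in M. \<forall>k. \<bar>f k x\<bar> \<le> g x"
    using bound by (simp add: AE_all_countable)
  with lim have "AE x in M. \<bar>l x\<bar> \<le> g x"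
  proof eventually_elim
    case (elim x)
    show ?case
      using elim(2) by (intro LIMSEQ_le_const2[OF tendsto_rabs[OF elim(1)]]) auto
  qed
  have dominated: "AE x in M. norm (\<bar>f k x - l x\<bar> powr p) \<le> 2 powr p * g x powr p" for k
    using bound[of k] \<open>AE x in M. \<bar>l x\<bar> \<le> g x\<close>
    by eventually_elim (use \<open>0 < p\<close> in \<open>simp add: abs_diff_powr_le\<close>)
  have lim0: "AE x in M. (\<lambda>k. \<bar>f k x - l x\<bar> powr p) \<longlonglongrightarrow> 0"
    using lim
  proof eventually_elim
    case (elim x)
    have "(\<lambda>k. \<bar>f k x - l x\<bar>) \<longlonglongrightarrow> 0"
      using tendsto_rabs_zero[OF LIM_zero[OF elim]] .
    then show ?case
      using \<open>0 < p\<close> by (intro tendsto_zero_powrI) auto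
  qed
  have int: "integrable M (\<lambda>x. 2 powr p * g x powr p)"
    using assms(6) by (rule integrable_mult_right)
  have meas: "(\<lambda>x. \<bar>f k x - l x\<bar> powr p) \<in> borel_measurable M" for k
    using assms(2,3) by measurable
  show "integrable M (\<lambda>x. \<bar>f k x - l x\<bar> powr p)" for k
    by (rule integrable_dominated_convergence2[OF borel_measurable_const meas int lim0 dominated])
  show "(\<lambda>k. \<integral>x. \<bar>f k x - l x\<bar> powr p \<partial>M) \<longlonglongrightarrow> 0"
    using integral_dominated_convergence[OF borel_measurable_const meas int lim0 dominated] by simp
qed

lemma delta_zeta_p_eq_integral:
  assumes "integrable lborel (\<lambda>x. \<bar>zeta_ext \<zeta> (u x) - zeta_ext \<zeta> (v x)\<bar> powr p)"
  shows "delta_zeta_p \<zeta> p u v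
    = ennreal ((\<integral>x. \<bar>zeta_ext \<zeta> (u x) - zeta_ext \<zeta> (v x)\<bar> powr p \<partial>lborel) powr (1 / p))"
  using nn_integral_eq_integral[OF assms] integral_nonneg_AE[of "\<lambda>x. \<bar>zeta_ext \<zeta> (u x) - zeta_ext \<zeta> (v x)\<bar> powr p" lborel]
  unfolding delta_zeta_p_def Let_def by simp

lemma delta_zeta_p_tendsto_zero:
  fixes us :: "nat \<Rightarrow> 'a::euclidean_space \<Rightarrow> ereal"
  assumes "0 < p" "continuous_on UNIV \<zeta>"
    and "\<And>k. us k \<in> borel_measurable borel" "u \<in> borel_measurable borel"
    and "AE x in lborel. (\<lambda>k. zeta_ext \<zeta> (us k x)) \<longlonglongrightarrow> zeta_ext \<zeta> (u x)"
    and "\<And>k x. K \<le> k \<Longrightarrow> \<bar>zeta_ext \<zeta> (us k x)\<bar> \<le> g x"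
    and "integrable lborel (\<lambda>x. g x powr p)"
  shows "(\<lambda>k. delta_zeta_p \<zeta> p (us k) u) \<longlonglongrightarrow> 0"
proof -
  have meas: "(\<lambda>x. zeta_ext \<zeta> (us (k + K) x)) \<in> borel_measurable lborel"
    "(\<lambda>x. zeta_ext \<zeta> (u x)) \<in> borel_measurable lborel" for k
    using assms(2,3,4) by (simp_all add: borel_measurable_zeta_ext)
  have "AE x in lborel. (\<lambda>k. zeta_ext \<zeta> (us (k + K) x)) \<longlonglongrightarrow> zeta_ext \<zeta> (u x)"
    using assms(5) by eventually_elim (rule LIMSEQ_ignore_initial_segment)
  note Lp = Lp_dominated_convergence[OF assms(1) meas this _ assms(7)]
  have int: "integrable lborel (\<lambda>x. \<bar>zeta_ext \<zeta> (us (k + K) x) - zeta_ext \<zeta> (u x)\<bar> powr p)" for k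
    using assms(6) by (intro Lp(1)) simp
  have "(\<lambda>k. \<integral>x. \<bar>zeta_ext \<zeta> (us (k + K) x) - zeta_ext \<zeta> (u x)\<bar> powr p \<partial>lborel) \<longlonglongrightarrow> 0"
    using assms(6) by (intro Lp(2)) simp
  then have "(\<lambda>k. ennreal ((\<integral>x. \<bar>zeta_ext \<zeta> (us (k + K) x) - zeta_ext \<zeta> (u x)\<bar> powr p \<partial>lborel)
      powr (1 / p))) \<longlonglongrightarrow> ennreal 0"
    using \<open>0 < p\<close> by (intro tendsto_ennrealI tendsto_zero_powrI[OF _ tendsto_const]) (auto intro: integral_nonneg_AE)
  then have "(\<lambda>k. delta_zeta_p \<zeta> p (us (k + K)) u) \<longlonglongrightarrow> 0"
    by (simp add: delta_zeta_p_eq_integral[OF int])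
  then show ?thesis
    by (rule LIMSEQ_offset)
qed

theorem lemma3p3:
  fixes \<zeta> :: "real \<Rightarrow> real" and p :: real
    and us :: "nat \<Rightarrow> 'a::euclidean_space \<Rightarrow> ereal" and u :: "'a \<Rightarrow> ereal"
  assumes "1 \<le> p"
    and "continuous_on UNIV \<zeta>"
    and "\<And>t. 0 \<le> \<zeta> t"
    and "antimono \<zeta>"
    and "(\<integral>\<^sup>+ t. ennreal (\<zeta> t powr p * t ^ (DIM('a) - 1)) * indicator {0..} t \<partial>lborel) < \<infinity>"
    and "\<And>k. us k \<in> Conv_coe"
    and "u \<in> Conv_coe"
    and "epi_converges us u"
  shows "(\<lambda>k. delta_zeta_p \<zeta> p (us k) u) \<longlonglongrightarrow> 0"
proof -
  have "0 < p"
    using assms(1) by simp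
  have "(\<zeta> \<longlongrightarrow> 0) at_top"
    by (rule antimono_tendsto_zero_at_top[OF assms(4,3) \<open>0 < p\<close> assms(5)])
  obtain \<alpha> \<beta> K where "0 < \<beta>" and lower: "\<And>k y. K \<le> k \<Longrightarrow> ereal (\<alpha> + \<beta> * norm y) \<le> us k y"
    by (rule epi_converges_uniformly_coercive[OF assms(8,6,7)]) blast
  show ?thesis
  proof (rule delta_zeta_p_tendsto_zero[where g="\<lambda>y. \<zeta> (\<alpha> + \<beta> * norm y)", OF \<open>0 < p\<close> assms(2)])
    show "us k \<in> borel_measurable borel" "u \<in> borel_measurable borel" for k
      using assms(6,7) by (simp_all add: Conv_coeD(3) lsc_fun_borel_measurable)
    show "AE x in lborel. (\<lambda>k. zeta_ext \<zeta> (us k x)) \<longlonglongrightarrow> zeta_ext \<zeta> (u x)"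
      using epi_converges_AE_tendsto[OF assms(8) Conv_coeD(4)[OF assms(6)] Conv_coeD(4)[OF assms(7)]]
      by eventually_elim
        (rule tendsto_zeta_ext[OF \<open>(\<zeta> \<longlongrightarrow> 0) at_top\<close> assms(2) _ Conv_coeD(1)[OF assms(7)]])
    show "\<bar>zeta_ext \<zeta> (us k y)\<bar> \<le> \<zeta> (\<alpha> + \<beta> * norm y)" if "K \<le> k" for k y
      using assms(4,3) lower[OF that] by (rule abs_zeta_ext_le)
    show "integrable lborel (\<lambda>y::'a. \<zeta> (\<alpha> + \<beta> * norm y) powr p)"
      using \<open>0 < p\<close> assms(3,5)
      by (intro integrable_antimono_radial[where G="\<lambda>t. \<zeta> t powr p"] antimono_powr[OF assms(4,3)]
          \<open>0 < \<beta>\<close>) auto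
  qed
qed

end
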